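(* Suppose Assumptions 3.2, 4.2 and 4.3 hold. Then there exist constants $0<a_*<b_*<\infty$, a constant $l_0>0$, and a function $w_0\in C^1((0,\infty))$ such that $$\tfrac12\sigma^2(x)w_0'(x)+\mu(x)w_0(x)+h(x)=l_0,\quad x\in(a_*,b_* ),$$ $c_1\le w_0(x)\le c_2$ for $x\in(a_*,b_* )$; $w_0(x)=c_2$, $w_0'(x)=0$ for $x\le a_*$; and $w_0(x)=c_1$, $w_0'(x)=0$ for $x\ge b_*$.
   Context: Standing setup. $W$ is a standard one-dimensional Brownian motion. $\mu,\sigma:[0,\infty)\to\mathbb R$ are continuous with $\sigma(x)>0$ for $x>0$, such that the SDE $dX_0(s)=\mu(X_0(s))ds+\sigma(X_0(s))dW(s)$ has a weak solution unique in law with state space $[0,\infty)$, for which $0$ is an unattainable (entrance or natural) boundary point and $\infty$ is a natural boundary point. The scale and speed densities are $s(x)=\exp\{-\int_1^x \frac{2\mu(y)}{\sigma^2(y)}dy\}$ and $m(x)=\frac{1}{\sigma^2(x)s(x)}$ for $x>0$. The generator is $\mathcal Lf(x)=\frac12\sigma^2(x)f''(x)+\mu(x)f'(x)$. Fix constants $0<c_1<c_2$ and a nonnegative continuous function $h$ on $[0,\infty)$. A control is an adapted càdlàg process $\varphi=\xi-\eta$, where $\xi,\eta$ are nonnegative, nondecreasing, càdlàg, $\xi(0-)=\eta(0-)=0$, and the measures $d\xi,d\eta$ are mutually singular; it is admissible if the controlled equation $dX(s)=\mu(X(s))ds+\sigma(X(s))dW(s)+d\xi(s)-d\eta(s)$,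 $X(0-)=x\ge0$, has a unique nonnegative weak solution $X$. For $x\ge0$, $\mathscr A_x$ is the set of admissible controls with $\mathbb E_x[\xi(T)]\le K_1(x)T^n+K_2(x)$ for all $T>0$, where $K_1,K_2$ are fixed positive functions and $n\ge1$ a fixed integer. Define $V_r(x)=\sup_{\varphi\in\mathscr A_x}\mathbb E_x\big[\int_0^\infty e^{-rs}(h(X(s))ds+c_1d\eta(s)-c_2d\xi(s))\big]$ for $r>0$. Assumption 3.2: (i) $\lim_{x\downarrow0}[h(x)+c_2\mu(x)]\le0$ and $\lim_{x\to\infty}[h(x)+c_1\mu(x)]<0$; (ii) there exist $0<a<b<\infty$ with $\int_a^bh(y)m(y)dy+\frac{c_1}{2s(b)}-\frac{c_2}{2s(a)}>0$. Assumption 4.2: For each $r>0$ there exist $0<a_r<b_r<\infty$ such that $V_r\in C^2([0,\infty))$ and: for $x\in(a_r,b_r)$, $rV_r(x)-\mathcal LV_r(x)-h(x)=0$ and $c_1\le V_r'(x)\le c_2$; for $x\ge b_r$, $rV_r(x)-\mathcal LV_r(x)-h(x)\ge0$ and $V_r'(x)=c_1$; for $x\le a_r$, $rV_r(x)-\mathcal LV_r(x)-h(x)\ge0$ and $V_r'(x)=c_2$. Assumption 4.3: $h,\mu,\sigma$ are continuously differentiable and $\inf_{x\in[a,b]}\sigma^2(x)>0$ for every $[a,b]\subset(0,\infty)$. *)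

theory Defs
  imports "HOL-Analysis.Analysis"
begin

definition oint1 :: "(real \<Rightarrow> real) \<Rightarrow> real \<Rightarrow> real" where
  "oint1 f x = (if 1 \<le> x then integral {1..x} f else - integral {x..1} f)"

definition scale_dens :: "(real \<Rightarrow> real) \<Rightarrow> (real \<Rightarrow> real) \<Rightarrow> real \<Rightarrow> real" where
  "scale_dens \<mu> \<sigma> x = exp (- oint1 (\<lambda>y. 2 * \<mu> y / (\<sigma> y)^2) x)"

definition speed_dens :: "(real \<Rightarrow> real) \<Rightarrow> (real \<Rightarrow> real) \<Rightarrow> real \<Rightarrow> real" where
  "speed_dens \<mu> \<sigma> x = 1 / ((\<sigma> x)^2 * scale_dens \<mu> \<sigma> x)"

definition gen :: "(real \<Rightarrow> real) \<Rightarrow> (real \<Rightarrow> real) \<Rightarrow> real \<Rightarrow> real \<Rightarrow> real \<Rightarrow> real" where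
  "gen \<mu> \<sigma> d1 d2 x = (1/2) * (\<sigma> x)^2 * d2 + \<mu> x * d1"

definition C2_nonneg :: "(real \<Rightarrow> real) \<Rightarrow> (real \<Rightarrow> real) \<Rightarrow> (real \<Rightarrow> real) \<Rightarrow> bool" where
  "C2_nonneg f f1 f2 \<longleftrightarrow>
     (\<forall>x\<ge>0. (f has_real_derivative f1 x) (at x within {0..}) \<and>
             (f1 has_real_derivative f2 x) (at x within {0..})) \<and>
     continuous_on {0..} f2"

definition C1_nonneg :: "(real \<Rightarrow> real) \<Rightarrow> bool" where
  "C1_nonneg f \<longleftrightarrow> (\<exists>f1. (\<forall>x\<ge>0. (f has_real_derivative f1 x) (at x within {0..}))
                         \<and> continuous_on {0..} f1)"

text \<open>Feller test: 0 is unattainable (entrance or natural), i.e. not an exit/regular point: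
  integral over (0,1] of s(y) * M[y,1] dy is infinite.\<close>
definition zero_unattainable :: "(real \<Rightarrow> real) \<Rightarrow> (real \<Rightarrow> real) \<Rightarrow> bool" where
  "zero_unattainable \<mu> \<sigma> \<longleftrightarrow>
     (\<integral>\<^sup>+ y. indicator {0<..1} y * ennreal (scale_dens \<mu> \<sigma> y) *
        (\<integral>\<^sup>+ z. indicator {y..1} z * ennreal (speed_dens \<mu> \<sigma> z) \<partial>lborel) \<partial>lborel) = \<infinity>"

text \<open>Feller test: oo is a natural boundary (neither exit nor entrance).\<close>
definition infty_natural :: "(real \<Rightarrow> real) \<Rightarrow> (real \<Rightarrow> real) \<Rightarrow> bool" where
  "infty_natural \<mu> \<sigma> \<longleftrightarrow>
     (\<integral>\<^sup>+ y. indicator {1..} y * ennreal (scale_dens \<mu> \<sigma> y) *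
        (\<integral>\<^sup>+ z. indicator {1..y} z * ennreal (speed_dens \<mu> \<sigma> z) \<partial>lborel) \<partial>lborel) = \<infinity> \<and>
     (\<integral>\<^sup>+ y. indicator {1..} y * ennreal (speed_dens \<mu> \<sigma> y) *
        (\<integral>\<^sup>+ z. indicator {1..y} z * ennreal (scale_dens \<mu> \<sigma> z) \<partial>lborel) \<partial>lborel) = \<infinity>"

end

theory Submission
  imports Defs
begin

text \<open>
  For barriers 0 < a < b let N(a,b) = (integral of h m over [a,b]) + c1/(2 s(b)) - c2/(2 s(a))
  and M(a,b) = (integral of m over [a,b]); N/M is the long-run average reward of the policy
  that reflects the diffusion at a and b. Assumption 3.2 (ii) makes the ratio positive
  somewhere, and Assumption 3.2 (i) makes G = N - l M decrease as a moves towards 0 or b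
  towards infinity (for l above the limits of h + c2 mu and h + c1 mu), so the ratio attains
  its supremum l0 > 0 at some a* < b*. Then G \<le> 0 everywhere with equality at (a*, b*), whose
  first-order conditions read h + c2 mu = l0 at a* and h + c1 mu = l0 at b*. The function
  w0(x) = c1 - 2 s(x) G(a*, x) solves the first-order equation, equals c2 at a* and c1 at b*
  with vanishing slope there, and stays in [c1, c2] in between because G \<le> 0; extending it by
  constants gives the claim. The argument is direct.
\<close>

lemma has_field_derivative_at_left_right:
  fixes f :: "real \<Rightarrow> real"
  assumes "(f has_field_derivative D) (at_left x)" "(f has_field_derivative D) (at_right x)"
  shows "(f has_field_derivative D) (at x)"
  using assms by (simp add: has_field_derivative_iff filterlim_split_at)

lemma has_real_derivative_clamp:
  fixes f f' :: "real \<Rightarrow> real"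
  assumes "a < b"
    and deriv: "\<And>y. y \<in> {a..b} \<Longrightarrow> (f has_real_derivative f' y) (at y within {a..b})"
    and "f' a = 0" "f' b = 0"
  shows "((\<lambda>x. f (max a (min b x))) has_real_derivative f' (max a (min b x))) (at x)"
proof -
  let ?g = "\<lambda>x. f (max a (min b x))"
  have inside: "(?g has_real_derivative f' y) (at y within {a..b})" if "y \<in> {a..b}" for y
    by (rule has_field_derivative_transform_within[OF deriv[OF that] zero_less_one that]) auto
  have below: "(?g has_real_derivative 0) (at y within {..a})" if "y \<le> a" for y
    by (rule has_field_derivative_transform_within[OF DERIV_const zero_less_one, of _ _ "f a"])
       (use that \<open>a < b\<close> in auto)
  have above: "(?g has_real_derivative 0) (at y within {b..})" if "b \<le> y" for y
    by (rule has_field_derivative_transform_within[OF DERIV_const zero_less_one, of _ _ "f b"])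
       (use that \<open>a < b\<close> in auto)
  consider "x < a" | "x = a" | "a < x" "x < b" | "x = b" | "b < x" by linarith
  then show ?thesis
  proof cases
    case 1
    then show ?thesis using below[of x] assms(3) at_within_interior[of x "{..a}"] by simp
  next
    case 2
    then show ?thesis
      using below[of a] inside[of a] assms(1,3)
      by (auto intro: has_field_derivative_at_left_right simp: at_within_Iic_at_left at_within_Icc_at_right)
  next
    case 3
    then show ?thesis using inside[of x] by (simp add: at_within_Icc_at)
  next
    case 4
    then show ?thesis
      using above[of b] inside[of b] assms(1,4)
      by (auto intro: has_field_derivative_at_left_right simp: at_within_Ici_at_right at_within_Icc_at_left)
  next
    case 5
    then show ?thesis using above[of x] assms(1,4) at_within_interior[of x "{b..}"] by simp
  qed
qed

lemma continuous_on_clamp: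
  fixes f :: "real \<Rightarrow> real"
  assumes "a \<le> b" "continuous_on {a..b} f"
  shows "continuous_on S (\<lambda>x. f (max a (min b x)))"
  using assms(1)
  by (intro continuous_on_compose2[OF assms(2)]
      continuous_on_max[OF continuous_on_const continuous_on_min[OF continuous_on_const continuous_on_id]])
    auto

lemma compact_ratio_maximum:
  fixes N M :: "'a::t2_space \<Rightarrow> real"
  assumes T: "compact T" and cont: "continuous_on T N" "continuous_on T M"
    and M_nonneg: "\<And>q. q \<in> T \<Longrightarrow> 0 \<le> M q"
    and M_pos: "\<And>q. q \<in> T \<Longrightarrow> 0 \<le> N q \<Longrightarrow> 0 < M q"
    and p': "p' \<in> T" "0 \<le> N p'"
  obtains p where "p \<in> T" "0 \<le> N p" "N p' / M p' \<le> N p / M p"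
    "\<And>q. q \<in> T \<Longrightarrow> N q \<le> N p / M p * M q"
proof -
  define K where "K = T \<inter> N -` {0..}"
  have "compact K"
    unfolding K_def using T cont(1)
    by (metis closed_atLeast compact_Int_closed compact_imp_closed continuous_closed_preimage Int_absorb1 inf_le1)
  moreover have "continuous_on K (\<lambda>q. N q / M q)"
    using cont M_pos unfolding K_def
    by (intro continuous_on_divide) (auto intro: continuous_on_subset simp: less_imp_neq[symmetric])
  ultimately obtain p where p: "p \<in> K" and max: "\<And>q. q \<in> K \<Longrightarrow> N q / M q \<le> N p / M p"
    using continuous_attains_sup[of K "\<lambda>q. N q / M q"] p' unfolding K_def by blast
  have bound: "N q \<le> N p / M p * M q" if "q \<in> T" for q
  proof (cases "0 \<le> N q")
    case True
    with max[of q] M_pos[OF that] that show ?thesis by (simp add: K_def pos_divide_le_eq)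
  next
    case False
    have "0 \<le> N p / M p" using p M_nonneg unfolding K_def by simp
    with False M_nonneg[OF that] show ?thesis by (meson mult_nonneg_nonneg not_le order_trans less_imp_le)
  qed
  show ?thesis by (rule that[OF _ _ max bound]) (use p p' in \<open>auto simp: K_def\<close>)
qed

lemma continuous_on_Times_fst: "continuous_on A f \<Longrightarrow> continuous_on (A \<times> B) (\<lambda>p. f (fst p))"
  by (rule continuous_on_compose2[OF _ continuous_on_fst[OF continuous_on_id]]) auto

lemma continuous_on_Times_snd: "continuous_on B f \<Longrightarrow> continuous_on (A \<times> B) (\<lambda>p. f (snd p))"
  by (rule continuous_on_compose2[OF _ continuous_on_snd[OF continuous_on_id]]) auto

lemma oint1_has_real_derivative:
  fixes f :: "real \<Rightarrow> real"
  assumes f: "continuous_on {0<..} f" and x: "0 < x"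
  shows "(oint1 f has_real_derivative f x) (at x)"
proof -
  define c where "c = min x 1 / 2"
  have c: "0 < c" "c < x" "c < 1" using x by (auto simp: c_def)
  have int: "f integrable_on {u..v}" if "0 < u" for u v
    by (rule integrable_continuous_real, rule continuous_on_subset[OF f]) (use that in auto)
  have eq: "oint1 f y = integral {c..y} f - integral {c..1} f" if "c < y" for y
  proof (cases "1 \<le> y")
    case True
    then show ?thesis
      using Henstock_Kurzweil_Integration.integral_combine[where a=c and c=1 and b=y and f=f] c int[of c y]
      by (simp add: oint1_def)
  next
    case False
    then show ?thesis
      using Henstock_Kurzweil_Integration.integral_combine[where a=c and c=y and b=1 and f=f] c that int[of c 1]
      by (simp add: oint1_def)
  qed
  have "((\<lambda>y. integral {c..y} f) has_real_derivative f x) (at x within {c..x+1})"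
    by (rule integral_has_real_derivative) (use c in \<open>auto intro: continuous_on_subset[OF f]\<close>)
  then have "((\<lambda>y. integral {c..y} f - integral {c..1} f) has_real_derivative f x) (at x)"
    using c by (auto simp: at_within_Icc_at intro: derivative_eq_intros)
  then show ?thesis
    by (rule has_field_derivative_transform_within_open[of _ _ _ "{c<..}"]) (use c eq in auto)
qed

lemma continuous_on_oint1:
  "continuous_on {0<..} f \<Longrightarrow> continuous_on {0<..} (oint1 f)"
  by (rule continuous_at_imp_continuous_on) (auto intro: DERIV_isCont oint1_has_real_derivative)

lemma integral_eq_oint1_diff:
  fixes f :: "real \<Rightarrow> real"
  assumes f: "continuous_on {0<..} f" and ab: "0 < a" "a \<le> b"
  shows "integral {a..b} f = oint1 f b - oint1 f a"
proof -
  have "(f has_integral oint1 f b - oint1 f a) {a..b}"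
  proof (rule fundamental_theorem_of_calculus[OF ab(2)])
    fix x assume "x \<in> {a..b}"
    with ab have "(oint1 f has_real_derivative f x) (at x)"
      by (intro oint1_has_real_derivative[OF f]) auto
    then show "(oint1 f has_vector_derivative f x) (at x within {a..b})"
      by (simp add: has_real_derivative_iff_has_vector_derivative has_vector_derivative_at_within)
  qed
  then show ?thesis by (rule integral_unique)
qed

locale diffusion_coefficients =
  fixes \<mu> \<sigma> :: "real \<Rightarrow> real"
  assumes continuous_drift: "continuous_on {0<..} \<mu>"
    and continuous_volatility: "continuous_on {0<..} \<sigma>"
    and volatility_pos: "0 < x \<Longrightarrow> 0 < \<sigma> x"
begin

definition inv_scale :: "real \<Rightarrow> real" where
  "inv_scale x = exp (oint1 (\<lambda>y. 2 * \<mu> y / (\<sigma> y)\<^sup>2) x)"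

lemma volatility_nonzero: "0 < x \<Longrightarrow> \<sigma> x \<noteq> 0"
  using volatility_pos by force

lemma inv_scale_pos: "0 < inv_scale x"
  by (simp add: inv_scale_def)

lemma scale_dens_eq: "scale_dens \<mu> \<sigma> x = 1 / inv_scale x"
  by (simp add: scale_dens_def inv_scale_def exp_minus inverse_eq_divide)

lemma speed_dens_eq: "speed_dens \<mu> \<sigma> x = inv_scale x / (\<sigma> x)\<^sup>2"
  by (simp add: speed_dens_def scale_dens_eq)

lemma speed_dens_pos: "0 < x \<Longrightarrow> 0 < speed_dens \<mu> \<sigma> x"
  using inv_scale_pos volatility_nonzero by (simp add: speed_dens_eq)

lemma inv_scale_has_real_derivative:
  assumes "0 < x"
  shows "(inv_scale has_real_derivative 2 * \<mu> x * speed_dens \<mu> \<sigma> x) (at x)"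
proof -
  have "continuous_on {0<..} (\<lambda>y. 2 * \<mu> y / (\<sigma> y)\<^sup>2)"
    by (auto intro!: continuous_intros continuous_drift continuous_volatility simp: volatility_nonzero)
  from DERIV_chain2[OF DERIV_exp oint1_has_real_derivative[OF this assms]]
  show ?thesis by (simp add: inv_scale_def[abs_def] speed_dens_eq mult_ac)
qed

lemma continuous_on_inv_scale: "continuous_on {0<..} inv_scale"
  by (rule continuous_at_imp_continuous_on) (auto intro: DERIV_isCont inv_scale_has_real_derivative)

lemma continuous_on_speed_dens: "continuous_on {0<..} (speed_dens \<mu> \<sigma>)"
  unfolding speed_dens_eq[abs_def]
  by (auto intro!: continuous_intros continuous_on_inv_scale continuous_volatility simp: volatility_nonzero)

end

locale barrier_problem = diffusion_coefficients +
  fixes h :: "real \<Rightarrow> real" and c1 c2 :: real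
  assumes continuous_reward: "continuous_on {0<..} h"
    and cost_less: "c1 < c2"
begin

text \<open>Here inv_scale = 1/s, and barrier_gain, speed_mass and net_gain l are the N, M and
  G = N - l M of the proof idea.\<close>

definition barrier_gain :: "real \<Rightarrow> real \<Rightarrow> real" where
  "barrier_gain a b =
     oint1 (\<lambda>y. h y * speed_dens \<mu> \<sigma> y) b - oint1 (\<lambda>y. h y * speed_dens \<mu> \<sigma> y) a
       + c1 * inv_scale b / 2 - c2 * inv_scale a / 2"

definition speed_mass :: "real \<Rightarrow> real \<Rightarrow> real" where
  "speed_mass a b = oint1 (speed_dens \<mu> \<sigma>) b - oint1 (speed_dens \<mu> \<sigma>) a"

definition net_gain :: "real \<Rightarrow> real \<Rightarrow> real \<Rightarrow> real" where
  "net_gain l a b = barrier_gain a b - l * speed_mass a b"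

lemma continuous_on_weighted_reward: "continuous_on {0<..} (\<lambda>y. h y * speed_dens \<mu> \<sigma> y)"
  by (intro continuous_intros continuous_reward continuous_on_speed_dens)

lemma barrier_gain_eq_integral:
  assumes "0 < a" "a \<le> b"
  shows "barrier_gain a b = integral {a..b} (\<lambda>y. h y * speed_dens \<mu> \<sigma> y)
           + c1 / (2 * scale_dens \<mu> \<sigma> b) - c2 / (2 * scale_dens \<mu> \<sigma> a)"
  using integral_eq_oint1_diff[OF continuous_on_weighted_reward assms]
  by (simp add: barrier_gain_def scale_dens_eq)

lemma oint1_speed_dens_has_real_derivative:
  "0 < x \<Longrightarrow> (oint1 (speed_dens \<mu> \<sigma>) has_real_derivative speed_dens \<mu> \<sigma> x) (at x)"
  by (rule oint1_has_real_derivative[OF continuous_on_speed_dens])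

lemma oint1_weighted_reward_has_real_derivative:
  "0 < x \<Longrightarrow>
    (oint1 (\<lambda>y. h y * speed_dens \<mu> \<sigma> y) has_real_derivative h x * speed_dens \<mu> \<sigma> x) (at x)"
  by (rule oint1_has_real_derivative[OF continuous_on_weighted_reward])

lemma continuous_on_barrier_gain:
  "continuous_on ({0<..} \<times> {0<..}) (\<lambda>p. barrier_gain (fst p) (snd p))"
proof -
  have oint: "continuous_on {0<..} (oint1 (\<lambda>y. h y * speed_dens \<mu> \<sigma> y))"
    by (rule continuous_on_oint1[OF continuous_on_weighted_reward])
  note fst = continuous_on_Times_fst[where B="{0<..}"] and snd = continuous_on_Times_snd[where A="{0<..}"]
  show ?thesis
    unfolding barrier_gain_def
    by (intro continuous_intros fst[OF oint] snd[OF oint]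
        fst[OF continuous_on_inv_scale] snd[OF continuous_on_inv_scale]) simp_all
qed

lemma continuous_on_speed_mass:
  "continuous_on ({0<..} \<times> {0<..}) (\<lambda>p. speed_mass (fst p) (snd p))"
  using continuous_on_oint1[OF continuous_on_speed_dens] unfolding speed_mass_def
  by (intro continuous_on_diff continuous_on_Times_snd continuous_on_Times_fst)

lemma speed_mass_pos:
  assumes "0 < a" "a < b"
  shows "0 < speed_mass a b"
proof -
  have "oint1 (speed_dens \<mu> \<sigma>) a < oint1 (speed_dens \<mu> \<sigma>) b"
  proof (rule DERIV_pos_imp_increasing[OF assms(2)])
    fix x assume "a \<le> x"
    with assms have "0 < x" by simp
    then show "\<exists>y. DERIV (oint1 (speed_dens \<mu> \<sigma>)) x :> y \<and> 0 < y"
      using oint1_speed_dens_has_real_derivative speed_dens_pos by blast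
  qed
  then show ?thesis by (simp add: speed_mass_def)
qed

lemma barrier_gain_diag: "barrier_gain a a = (c1 - c2) * inv_scale a / 2"
  by (simp add: barrier_gain_def field_simps)

lemma barrier_gain_diag_neg: "barrier_gain a a < 0"
  using cost_less inv_scale_pos[of a] by (simp add: barrier_gain_diag mult_neg_pos)

lemma speed_mass_nonneg: "0 < a \<Longrightarrow> a \<le> b \<Longrightarrow> 0 \<le> speed_mass a b"
  using speed_mass_pos[of a b] by (cases "a = b") (auto simp: speed_mass_def)

lemma net_gain_split:
  "net_gain l a b = net_gain l a x + net_gain l x b - (c1 - c2) * inv_scale x / 2"
  by (simp add: net_gain_def barrier_gain_def speed_mass_def field_simps)

lemma net_gain_has_real_derivative_left:
  assumes "0 < a"
  shows "((\<lambda>a. net_gain l a b) has_real_derivative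
           speed_dens \<mu> \<sigma> a * (l - (h a + c2 * \<mu> a))) (at a)"
proof -
  have "((\<lambda>a. net_gain l a b) has_real_derivative
      0 - h a * speed_dens \<mu> \<sigma> a + 0 - c2 * (2 * \<mu> a * speed_dens \<mu> \<sigma> a) / 2
        - l * (0 - speed_dens \<mu> \<sigma> a)) (at a)"
    unfolding net_gain_def barrier_gain_def speed_mass_def
    by (intro DERIV_diff DERIV_add DERIV_cdivide DERIV_cmult DERIV_const assms
        oint1_weighted_reward_has_real_derivative oint1_speed_dens_has_real_derivative
        inv_scale_has_real_derivative)
  then show ?thesis by (rule DERIV_cong) (simp add: algebra_simps)
qed

lemma net_gain_has_real_derivative_right:
  assumes "0 < b"
  shows "(net_gain l a has_real_derivative speed_dens \<mu> \<sigma> b * (h b + c1 * \<mu> b - l)) (at b)"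
proof -
  have "(net_gain l a has_real_derivative
      h b * speed_dens \<mu> \<sigma> b - 0 + c1 * (2 * \<mu> b * speed_dens \<mu> \<sigma> b) / 2 - 0
        - l * (speed_dens \<mu> \<sigma> b - 0)) (at b)"
    unfolding net_gain_def[abs_def] barrier_gain_def speed_mass_def
    by (intro DERIV_diff DERIV_add DERIV_cdivide DERIV_cmult DERIV_const assms
        oint1_weighted_reward_has_real_derivative oint1_speed_dens_has_real_derivative
        inv_scale_has_real_derivative)
  then show ?thesis by (rule DERIV_cong) (simp add: algebra_simps)
qed

lemma continuous_on_net_gain_left: "0 < a \<Longrightarrow> continuous_on {a..a'} (\<lambda>a. net_gain l a b)"
  by (intro continuous_at_imp_continuous_on ballI DERIV_isCont[OF net_gain_has_real_derivative_left]) auto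

lemma continuous_on_net_gain_right: "0 < b \<Longrightarrow> continuous_on {b..b'} (net_gain l a)"
  by (intro continuous_at_imp_continuous_on ballI DERIV_isCont[OF net_gain_has_real_derivative_right]) auto

lemma net_gain_mono_left:
  assumes "0 < a" "a \<le> a'" and below: "\<And>x. a < x \<Longrightarrow> x < a' \<Longrightarrow> h x + c2 * \<mu> x \<le> l"
  shows "net_gain l a b \<le> net_gain l a' b"
proof (rule DERIV_nonneg_imp_increasing_open[OF \<open>a \<le> a'\<close> _
      continuous_on_net_gain_left[OF \<open>0 < a\<close>]])
  fix x assume x: "a < x" "x < a'"
  with assms have "0 < x" by simp
  moreover have "0 \<le> speed_dens \<mu> \<sigma> x * (l - (h x + c2 * \<mu> x))"
    using below[OF x] speed_dens_pos[OF \<open>0 < x\<close>] by simp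
  ultimately show "\<exists>y. ((\<lambda>a. net_gain l a b) has_real_derivative y) (at x) \<and> 0 \<le> y"
    using net_gain_has_real_derivative_left by blast
qed

lemma net_gain_antimono_right:
  assumes "0 < b" "b \<le> b'" and above: "\<And>x. b < x \<Longrightarrow> x < b' \<Longrightarrow> h x + c1 * \<mu> x \<le> l"
  shows "net_gain l a b' \<le> net_gain l a b"
proof (rule DERIV_nonpos_imp_decreasing_open[OF \<open>b \<le> b'\<close> _
      continuous_on_net_gain_right[OF \<open>0 < b\<close>]])
  fix x assume x: "b < x" "x < b'"
  with assms have "0 < x" by simp
  moreover have "speed_dens \<mu> \<sigma> x * (h x + c1 * \<mu> x - l) \<le> 0"
    using above[OF x] speed_dens_pos[OF \<open>0 < x\<close>] by (simp add: mult_nonneg_nonpos)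
  ultimately show "\<exists>y. (net_gain l a has_real_derivative y) (at x) \<and> y \<le> 0"
    using net_gain_has_real_derivative_right by blast
qed

lemma net_gain_diag_neg: "net_gain l a a < 0"
  using barrier_gain_diag_neg by (simp add: net_gain_def speed_mass_def)

lemma net_gain_nonpos_if_nonpos_on_box:
  assumes "0 < a0" "a0 < b0"
    and below: "\<And>x. 0 < x \<Longrightarrow> x \<le> a0 \<Longrightarrow> h x + c2 * \<mu> x \<le> l"
    and above: "\<And>x. b0 \<le> x \<Longrightarrow> h x + c1 * \<mu> x \<le> l"
    and box: "\<And>a b. a0 \<le> a \<Longrightarrow> a < b \<Longrightarrow> b \<le> b0 \<Longrightarrow> net_gain l a b \<le> 0"
    and ab: "0 < a" "a < b"
  shows "net_gain l a b \<le> 0"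
proof -
  consider "b \<le> a0" | "b0 \<le> a" | "a < b0" "a0 < b" by linarith
  then show ?thesis
  proof cases
    case 1
    then have "net_gain l a b \<le> net_gain l b b"
      using ab by (intro net_gain_mono_left below) auto
    with net_gain_diag_neg[of l b] show ?thesis by linarith
  next
    case 2
    then have "net_gain l a b \<le> net_gain l a a"
      using ab assms(1,2) by (intro net_gain_antimono_right above) auto
    with net_gain_diag_neg[of l a] show ?thesis by linarith
  next
    case 3
    define a' b' where "a' = max a a0" and "b' = min b b0"
    have "net_gain l a b \<le> net_gain l a' b"
      using ab by (intro net_gain_mono_left below) (auto simp: a'_def)
    also have "\<dots> \<le> net_gain l a' b'"
      using ab 3 assms(1) by (intro net_gain_antimono_right above) (auto simp: a'_def b'_def)
    also have "\<dots> \<le> 0"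
      using ab 3 assms(2) by (intro box) (auto simp: a'_def b'_def)
    finally show ?thesis .
  qed
qed

lemma barrier_ratio_maximum_on_box:
  assumes "0 < a0" "a0 \<le> a1" "a1 < b1" "b1 \<le> b0" "0 < barrier_gain a1 b1"
  obtains aa bb where "a0 \<le> aa" "aa < bb" "bb \<le> b0"
    "barrier_gain a1 b1 / speed_mass a1 b1 \<le> barrier_gain aa bb / speed_mass aa bb"
    "\<And>a b. a0 \<le> a \<Longrightarrow> a < b \<Longrightarrow> b \<le> b0 \<Longrightarrow>
       barrier_gain a b \<le> barrier_gain aa bb / speed_mass aa bb * speed_mass a b"
proof -
  define T where "T = {p. a0 \<le> fst p \<and> fst p \<le> snd p \<and> snd p \<le> b0}"
  have T_pos: "T \<subseteq> {0<..} \<times> {0<..}" using assms(1) by (auto simp: T_def)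
  have "T = ({a0..b0} \<times> {a0..b0}) \<inter> {p. fst p \<le> snd p}" by (auto simp: T_def)
  then have "compact T"
    by (auto intro!: compact_Int_closed compact_Times closed_Collect_le continuous_intros)
  then obtain p where p: "p \<in> T" "0 \<le> barrier_gain (fst p) (snd p)"
    and ratio: "barrier_gain a1 b1 / speed_mass a1 b1
                  \<le> barrier_gain (fst p) (snd p) / speed_mass (fst p) (snd p)"
    and max: "\<And>q. q \<in> T \<Longrightarrow> barrier_gain (fst q) (snd q)
                 \<le> barrier_gain (fst p) (snd p) / speed_mass (fst p) (snd p) * speed_mass (fst q) (snd q)"
  proof (rule compact_ratio_maximum[where p'="(a1, b1)"])
    show "continuous_on T (\<lambda>p. barrier_gain (fst p) (snd p))"
      by (rule continuous_on_subset[OF continuous_on_barrier_gain T_pos])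
    show "continuous_on T (\<lambda>p. speed_mass (fst p) (snd p))"
      by (rule continuous_on_subset[OF continuous_on_speed_mass T_pos])
    show "0 \<le> speed_mass (fst q) (snd q)" if "q \<in> T" for q
      using that assms(1) by (intro speed_mass_nonneg) (auto simp: T_def)
    show "0 < speed_mass (fst q) (snd q)" if "q \<in> T" "0 \<le> barrier_gain (fst q) (snd q)" for q
      using that assms(1) barrier_gain_diag_neg[of "fst q"]
      by (intro speed_mass_pos) (auto simp: T_def order.order_iff_strict)
  qed (use assms in \<open>auto simp: T_def\<close>)
  moreover have "fst p < snd p"
    using p barrier_gain_diag_neg[of "fst p"] by (auto simp: T_def order.order_iff_strict)
  ultimately show ?thesis
    using max by (intro that[of "fst p" "snd p"]) (auto simp: T_def)
qed

lemma optimal_barriers_exist: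
  assumes near_zero: "\<And>l. 0 < l \<Longrightarrow> eventually (\<lambda>x. h x + c2 * \<mu> x < l) (at_right 0)"
    and near_infinity: "\<And>l. 0 < l \<Longrightarrow> eventually (\<lambda>x. h x + c1 * \<mu> x < l) at_top"
    and profitable: "0 < a1" "a1 < b1" "0 < barrier_gain a1 b1"
  obtains aa bb l where "0 < aa" "aa < bb" "0 < l" "net_gain l aa bb = 0"
    "\<And>a b. 0 < a \<Longrightarrow> a < b \<Longrightarrow> net_gain l a b \<le> 0"
proof -
  define l1 where "l1 = barrier_gain a1 b1 / speed_mass a1 b1"
  have "0 < l1" using profitable speed_mass_pos[of a1 b1] by (simp add: l1_def)
  obtain d where "0 < d" and d: "\<And>x. 0 < x \<Longrightarrow> x < d \<Longrightarrow> h x + c2 * \<mu> x < l1"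
    using near_zero[OF \<open>0 < l1\<close>] unfolding eventually_at_right_field by auto
  obtain b0' where b0': "\<And>x. b0' \<le> x \<Longrightarrow> h x + c1 * \<mu> x < l1"
    using near_infinity[OF \<open>0 < l1\<close>] unfolding eventually_at_top_linorder by blast
  define a0 b0 where "a0 = min a1 (d / 2)" and "b0 = max b1 b0'"
  have a0b0: "0 < a0" "a0 \<le> a1" "b1 \<le> b0" "a0 < b0"
    using \<open>0 < d\<close> profitable by (auto simp: a0_def b0_def)
  obtain aa bb where opt: "a0 \<le> aa" "aa < bb" "bb \<le> b0"
    and ratio: "l1 \<le> barrier_gain aa bb / speed_mass aa bb"
    and max: "\<And>a b. a0 \<le> a \<Longrightarrow> a < b \<Longrightarrow> b \<le> b0 \<Longrightarrow>
                barrier_gain a b \<le> barrier_gain aa bb / speed_mass aa bb * speed_mass a b"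
    using barrier_ratio_maximum_on_box[OF a0b0(1,2) profitable(2) a0b0(3) profitable(3)]
    unfolding l1_def by blast
  define l where "l = barrier_gain aa bb / speed_mass aa bb"
  have "0 < aa" "0 < l" using opt a0b0 ratio \<open>0 < l1\<close> by (auto simp: l_def)
  show ?thesis
  proof (rule that[OF \<open>0 < aa\<close> \<open>aa < bb\<close> \<open>0 < l\<close>])
    show "net_gain l aa bb = 0"
      using speed_mass_pos[OF \<open>0 < aa\<close> \<open>aa < bb\<close>] by (simp add: net_gain_def l_def)
    show "net_gain l a b \<le> 0" if "0 < a" "a < b" for a b
    proof (rule net_gain_nonpos_if_nonpos_on_box[OF \<open>0 < a0\<close> \<open>a0 < b0\<close> _ _ _ that])
      show "h x + c2 * \<mu> x \<le> l" if "0 < x" "x \<le> a0" for x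
        using d[of x] that ratio \<open>0 < d\<close> by (simp add: a0_def l_def)
      show "h x + c1 * \<mu> x \<le> l" if "b0 \<le> x" for x
        using b0'[of x] that ratio by (simp add: b0_def l_def)
      show "net_gain l a b \<le> 0" if "a0 \<le> a" "a < b" "b \<le> b0" for a b
        using max[OF that] by (simp add: net_gain_def l_def)
    qed
  qed
qed

lemma optimal_barriers_first_order:
  assumes "0 < aa" "aa < bb" and zero: "net_gain l aa bb = 0"
    and nonpos: "\<And>a b. 0 < a \<Longrightarrow> a < b \<Longrightarrow> net_gain l a b \<le> 0"
  shows "h aa + c2 * \<mu> aa = l" "h bb + c1 * \<mu> bb = l"
proof -
  have "speed_dens \<mu> \<sigma> aa * (l - (h aa + c2 * \<mu> aa)) = 0"
  proof (rule DERIV_local_max[OF net_gain_has_real_derivative_left[OF \<open>0 < aa\<close>]])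
    show "0 < min aa (bb - aa)" using assms by simp
    show "\<forall>y. \<bar>aa - y\<bar> < min aa (bb - aa) \<longrightarrow> net_gain l y bb \<le> net_gain l aa bb"
      using nonpos zero by (auto simp: abs_if)
  qed
  then show "h aa + c2 * \<mu> aa = l" using speed_dens_pos[OF \<open>0 < aa\<close>] by simp
  have "0 < bb" using assms by simp
  have "speed_dens \<mu> \<sigma> bb * (h bb + c1 * \<mu> bb - l) = 0"
  proof (rule DERIV_local_max[OF net_gain_has_real_derivative_right[OF \<open>0 < bb\<close>]])
    show "0 < bb - aa" using assms by simp
    show "\<forall>y. \<bar>bb - y\<bar> < bb - aa \<longrightarrow> net_gain l aa y \<le> net_gain l aa bb"
      using nonpos zero assms(1) by (auto simp: abs_if)
  qed
  then show "h bb + c1 * \<mu> bb = l" using speed_dens_pos[OF \<open>0 < bb\<close>] by simp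
qed

definition marginal_value :: "real \<Rightarrow> real \<Rightarrow> real \<Rightarrow> real" where
  "marginal_value l a x = c1 - 2 * net_gain l a x / inv_scale x"

definition marginal_value_slope :: "real \<Rightarrow> real \<Rightarrow> real \<Rightarrow> real" where
  "marginal_value_slope l a x = 2 * (l - h x - \<mu> x * marginal_value l a x) / (\<sigma> x)\<^sup>2"

lemma marginal_value_has_real_derivative:
  assumes "0 < x"
  shows "(marginal_value l a has_real_derivative marginal_value_slope l a x) (at x)"
proof -
  have "(marginal_value l a has_real_derivative
      0 - (2 * (speed_dens \<mu> \<sigma> x * (h x + c1 * \<mu> x - l)) * inv_scale x
             - 2 * net_gain l a x * (2 * \<mu> x * speed_dens \<mu> \<sigma> x)) / (inv_scale x * inv_scale x)) (at x)"
    unfolding marginal_value_def[abs_def] using inv_scale_pos[of x]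
    by (intro DERIV_diff DERIV_const DERIV_cmult DERIV_divide net_gain_has_real_derivative_right
        inv_scale_has_real_derivative assms) simp
  then show ?thesis
    by (rule DERIV_cong)
      (use inv_scale_pos[of x] volatility_nonzero[OF assms]
        in \<open>simp add: marginal_value_slope_def marginal_value_def speed_dens_eq field_simps\<close>)
qed

lemma marginal_value_ode:
  "0 < x \<Longrightarrow> (\<sigma> x)\<^sup>2 * marginal_value_slope l a x / 2 + \<mu> x * marginal_value l a x + h x = l"
  using volatility_nonzero by (simp add: marginal_value_slope_def field_simps)

lemma continuous_on_marginal_value_slope: "continuous_on {0<..} (marginal_value_slope l a)"
proof -
  have "continuous_on {0<..} (marginal_value l a)"
    by (intro continuous_at_imp_continuous_on ballI DERIV_isCont[OF marginal_value_has_real_derivative]) auto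
  then show ?thesis
    unfolding marginal_value_slope_def[abs_def]
    by (intro continuous_intros continuous_drift continuous_volatility continuous_reward)
      (auto simp: volatility_nonzero)
qed

lemma marginal_value_at_left: "marginal_value l a a = c2"
  using inv_scale_pos[of a] by (simp add: marginal_value_def net_gain_def speed_mass_def barrier_gain_diag)

lemma marginal_value_at_right: "net_gain l a b = 0 \<Longrightarrow> marginal_value l a b = c1"
  by (simp add: marginal_value_def)

lemma marginal_value_bounds:
  assumes "0 < aa" "aa < x" "x < bb" and zero: "net_gain l aa bb = 0"
    and nonpos: "\<And>a b. 0 < a \<Longrightarrow> a < b \<Longrightarrow> net_gain l a b \<le> 0"
  shows "c1 \<le> marginal_value l aa x" "marginal_value l aa x \<le> c2"
proof -
  have "net_gain l aa x \<le> 0" using assms by (intro nonpos) auto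
  then show "c1 \<le> marginal_value l aa x"
    using inv_scale_pos[of x] by (simp add: marginal_value_def divide_nonpos_pos)
  have "net_gain l x bb \<le> 0" using assms by (intro nonpos) auto
  then have "(c1 - c2) * inv_scale x / 2 \<le> net_gain l aa x"
    using net_gain_split[of l aa bb x] zero by simp
  then show "marginal_value l aa x \<le> c2"
    using inv_scale_pos[of x] by (simp add: marginal_value_def field_simps)
qed

end

theorem lemma4p9:
  fixes \<mu> \<sigma> h :: "real \<Rightarrow> real"
    and c1 c2 :: real
    and V :: "real \<Rightarrow> real \<Rightarrow> real"
  assumes c: "0 < c1" "c1 < c2"
    and cont: "continuous_on {0..} \<mu>" "continuous_on {0..} \<sigma>" "continuous_on {0..} h"
    and h_nonneg: "\<forall>x\<ge>0. h x \<ge> 0"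
    and sigma_pos: "\<forall>x>0. \<sigma> x > 0"
    and bd0: "zero_unattainable \<mu> \<sigma>"
    and bdinf: "infty_natural \<mu> \<sigma>"
    \<comment> \<open>Assumption 3.2\<close>
    and A32_i0: "\<exists>L. ((\<lambda>x. h x + c2 * \<mu> x) \<longlongrightarrow> L) (at_right 0) \<and> L \<le> 0"
    and A32_iinf: "(\<exists>L. ((\<lambda>x. h x + c1 * \<mu> x) \<longlongrightarrow> L) at_top \<and> L < 0)
                   \<or> filterlim (\<lambda>x. h x + c1 * \<mu> x) at_bot at_top"
    and A32_ii: "\<exists>a b. 0 < a \<and> a < b \<and>
                   integral {a..b} (\<lambda>y. h y * speed_dens \<mu> \<sigma> y)
                   + c1 / (2 * scale_dens \<mu> \<sigma> b) - c2 / (2 * scale_dens \<mu> \<sigma> a) > 0"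
    \<comment> \<open>Assumption 4.2 (V r plays the role of the value function V_r)\<close>
    and A42: "\<forall>r>0. \<exists>ar br V1 V2. 0 < ar \<and> ar < br \<and> C2_nonneg (V r) V1 V2 \<and>
               (\<forall>x\<in>{ar<..<br}. r * V r x - gen \<mu> \<sigma> (V1 x) (V2 x) x - h x = 0
                                  \<and> c1 \<le> V1 x \<and> V1 x \<le> c2) \<and>
               (\<forall>x\<ge>br. r * V r x - gen \<mu> \<sigma> (V1 x) (V2 x) x - h x \<ge> 0 \<and> V1 x = c1) \<and>
               (\<forall>x. 0 \<le> x \<and> x \<le> ar \<longrightarrow>
                      r * V r x - gen \<mu> \<sigma> (V1 x) (V2 x) x - h x \<ge> 0 \<and> V1 x = c2)"
    \<comment> \<open>Assumption 4.3\<close>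
    and A43: "C1_nonneg h" "C1_nonneg \<mu>" "C1_nonneg \<sigma>"
             "\<forall>a b. 0 < a \<and> a \<le> b \<longrightarrow> (INF x\<in>{a..b}. (\<sigma> x)^2) > 0"
  shows "\<exists>as bs l0 w0 w0'. 0 < as \<and> as < bs \<and> l0 > 0 \<and>
           (\<forall>x>0. (w0 has_real_derivative w0' x) (at x)) \<and> continuous_on {0<..} w0' \<and>
           (\<forall>x\<in>{as<..<bs}. (1/2) * (\<sigma> x)^2 * w0' x + \<mu> x * w0 x + h x = l0) \<and>
           (\<forall>x\<in>{as<..<bs}. c1 \<le> w0 x \<and> w0 x \<le> c2) \<and>
           (\<forall>x. 0 < x \<and> x \<le> as \<longrightarrow> w0 x = c2 \<and> w0' x = 0) \<and>
           (\<forall>x\<ge>bs. w0 x = c1 \<and> w0' x = 0)"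
proof -
  interpret barrier_problem \<mu> \<sigma> h c1 c2
    using cont sigma_pos c by unfold_locales (auto intro: continuous_on_subset)
  obtain L0 where L0: "((\<lambda>x. h x + c2 * \<mu> x) \<longlongrightarrow> L0) (at_right 0)" "L0 \<le> 0"
    using A32_i0 by blast
  have near_zero: "\<forall>\<^sub>F x in at_right 0. h x + c2 * \<mu> x < l" if "0 < l" for l
    using L0(2) that by (intro order_tendstoD(2)[OF L0(1)]) auto
  have near_infinity: "\<forall>\<^sub>F x in at_top. h x + c1 * \<mu> x < l" if "0 < l" for l
    using A32_iinf that by (auto intro: order_tendstoD(2) simp: filterlim_at_bot_dense)
  obtain a1 b1 where "0 < a1" "a1 < b1" "0 < barrier_gain a1 b1"
    using A32_ii barrier_gain_eq_integral by (metis less_imp_le)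
  then obtain aa bb l where opt: "0 < aa" "aa < bb" "0 < l" "net_gain l aa bb = 0"
    "\<And>a b. 0 < a \<Longrightarrow> a < b \<Longrightarrow> net_gain l a b \<le> 0"
    using optimal_barriers_exist near_zero near_infinity by blast
  let ?w = "marginal_value l aa" and ?w' = "marginal_value_slope l aa"
  let ?clamp = "\<lambda>x. max aa (min bb x)"
  have ends: "?w aa = c2" "?w bb = c1" "?w' aa = 0" "?w' bb = 0"
    using marginal_value_at_left marginal_value_at_right[OF opt(4)]
      optimal_barriers_first_order[OF opt(1,2,4,5)]
    by (simp_all add: marginal_value_slope_def mult.commute)
  have "((\<lambda>x. ?w (?clamp x)) has_real_derivative ?w' (?clamp x)) (at x)" for x
    using opt(1,2) ends
    by (intro has_real_derivative_clamp)
      (auto intro!: has_field_derivative_at_within[OF marginal_value_has_real_derivative])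
  moreover have "continuous_on {0<..} (\<lambda>x. ?w' (?clamp x))"
    using opt(1,2)
    by (intro continuous_on_clamp continuous_on_subset[OF continuous_on_marginal_value_slope]) auto
  ultimately show ?thesis
    using opt(1-3) ends
    by (intro exI[of _ aa] exI[of _ bb] exI[of _ l] exI[of _ "\<lambda>x. ?w (?clamp x)"]
        exI[of _ "\<lambda>x. ?w' (?clamp x)"])
      (auto simp: marginal_value_ode marginal_value_bounds[OF opt(1) _ _ opt(4,5)])
qed

end
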